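(* Let $\mathcal X=\{X_1,\dots,X_n\}$ be a multi-set of real symmetric $2\times2$ matrices and $S=\lim_{m\to\infty}\frac1m\log\sum_{i=1}^n\exp(mX_i)$ its log-exp-supremum. Then $S$ is an upper bound of $\mathcal X$ in the Loewner order, i.e. $X_j\le_{\mathrm L}S$ for all $j\in\{1,\dots,n\}$.
   Context: For real symmetric matrices $A,B$, $A\le_{\mathrm L}B$ (Loewner order) means that $B-A$ is positive semidefinite. $\exp$ and $\log$ denote the matrix exponential and matrix logarithm. *)

theory Defs
  imports "HOL-Analysis.Analysis"
begin

type_synonym mat2 = "real^2^2"

primrec mpow :: "real^'n^'n \<Rightarrow> nat \<Rightarrow> real^'n^'n" where
  "mpow A 0 = mat 1"
| "mpow A (Suc k) = A ** mpow A k"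

definition sym_mat :: "real^'n^'n \<Rightarrow> bool" where
  "sym_mat A \<longleftrightarrow> transpose A = A"

definition mexp :: "real^'n^'n \<Rightarrow> real^'n^'n" where
  "mexp A = (\<Sum>k. (1 / fact k) *\<^sub>R mpow A k)"

definition mlog :: "real^'n^'n \<Rightarrow> real^'n^'n" where
  "mlog M = (THE L. sym_mat L \<and> mexp L = M)"

definition psd :: "real^'n^'n \<Rightarrow> bool" where
  "psd A \<longleftrightarrow> sym_mat A \<and> (\<forall>v. v \<bullet> (A *v v) \<ge> 0)"

definition loewner_le :: "real^'n^'n \<Rightarrow> real^'n^'n \<Rightarrow> bool" where
  "loewner_le A B \<longleftrightarrow> psd (B - A)"

end

theory Submission
  imports Defs "HOL-Real_Asymp.Real_Asymp"
begin

text \<open>Since \<open>exp (m X\<^sub>j) \<le> \<Sum>\<^sub>i exp (m X\<^sub>i)\<close> in the Loewner order and \<open>log\<close> is operator monotone,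
  \<open>X\<^sub>j \<le> (1/m) log \<Sum>\<^sub>i exp (m X\<^sub>i)\<close> for every \<open>m \<ge> 1\<close>; the Loewner order is closed, so the
  inequality survives the limit \<open>m \<rightarrow> \<infinity>\<close>.
  A symmetric \<open>2 \<times> 2\<close> matrix is \<open>a P + b Q\<close> for complementary orthogonal projections \<open>P\<close>, \<open>Q\<close>,
  which makes \<open>exp\<close>, \<open>log\<close> and resolvents explicit. Operator monotonicity of \<open>log\<close> follows from
  the operator antitonicity of \<open>A \<mapsto> (A + t)\<inverse>\<close> by integrating in \<open>t\<close>, since
  \<open>log a = \<integral>\<^sub>0\<^sup>\<infinity> (1/(1+t) - 1/(a+t)) dt\<close>.\<close>

section \<open>Quadratic forms and the Loewner order\<close>

lemma matrix_add_rdistrib: "((A::'a::semiring_1^'n^'m) + B) ** C = A ** C + B ** C"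
  by (vector matrix_matrix_mult_def sum.distrib distrib_right)

lemma sym_mat_add: "sym_mat A \<Longrightarrow> sym_mat B \<Longrightarrow> sym_mat (A + B)"
  by (simp add: sym_mat_def transpose_def vec_eq_iff)

lemma sym_mat_diff: "sym_mat A \<Longrightarrow> sym_mat B \<Longrightarrow> sym_mat (A - B)"
  by (simp add: sym_mat_def transpose_def vec_eq_iff)

lemma sym_mat_scaleR: "sym_mat A \<Longrightarrow> sym_mat (c *\<^sub>R A)"
  by (simp add: sym_mat_def transpose_scalar)

lemma sym_mat_sum: "(\<And>i. i \<in> I \<Longrightarrow> sym_mat (f i)) \<Longrightarrow> sym_mat (sum f I)"
  by (induction I rule: infinite_finite_induct)
     (auto simp: sym_mat_def transpose_def vec_eq_iff)

lemma sym_mat_nth: "sym_mat A \<Longrightarrow> A $ i $ j = A $ j $ i"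
  unfolding sym_mat_def transpose_def by (metis vec_lambda_beta)

lemma inner_matrix_sym: "sym_mat A \<Longrightarrow> x \<bullet> (A *v y) = (A *v x) \<bullet> y"
  by (metis dot_lmul_matrix sym_mat_def transpose_matrix_vector)

definition quad_form :: "real^'n^'n \<Rightarrow> real^'n \<Rightarrow> real" where
  "quad_form A v = v \<bullet> (A *v v)"

lemma quad_form_add: "quad_form (A + B) v = quad_form A v + quad_form B v"
  by (simp add: quad_form_def matrix_vector_mult_add_rdistrib inner_add_right)

lemma quad_form_diff: "quad_form (A - B) v = quad_form A v - quad_form B v"
  by (simp add: quad_form_def matrix_vector_mult_diff_rdistrib inner_diff_right)

lemma quad_form_scaleR: "quad_form (c *\<^sub>R A) v = c * quad_form A v"
  by (simp add: quad_form_def scaleR_matrix_vector_assoc[symmetric])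

lemma quad_form_sum: "quad_form (sum f I) v = (\<Sum>i\<in>I. quad_form (f i) v)"
  by (induction I rule: infinite_finite_induct) (simp_all add: quad_form_add, simp_all add: quad_form_def)

lemma quad_form_mat_1: "quad_form (mat 1) v = v \<bullet> v"
  by (simp add: quad_form_def)

lemma psd_iff_quad_form: "psd A \<longleftrightarrow> sym_mat A \<and> (\<forall>v. quad_form A v \<ge> 0)"
  by (simp add: psd_def quad_form_def)

lemma loewner_le_iff_quad_form:
  "loewner_le A B \<longleftrightarrow> sym_mat (B - A) \<and> (\<forall>v. quad_form A v \<le> quad_form B v)"
  by (simp add: loewner_le_def psd_iff_quad_form quad_form_diff)

lemma psd_scaleR: "c \<ge> 0 \<Longrightarrow> psd A \<Longrightarrow> psd (c *\<^sub>R A)"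
  by (simp add: psd_iff_quad_form sym_mat_scaleR quad_form_scaleR)

lemma psd_sum: "(\<And>i. i \<in> I \<Longrightarrow> psd (f i)) \<Longrightarrow> psd (sum f I)"
  by (simp add: psd_iff_quad_form sym_mat_sum quad_form_sum sum_nonneg)

lemma loewner_le_member_sum:
  assumes "finite I" "j \<in> I" "\<And>i. i \<in> I \<Longrightarrow> psd (f i)"
  shows "loewner_le (f j) (sum f I)"
proof -
  have "sum f I - f j = sum f (I - {j})"
    using assms(1,2) by (simp add: sum_diff1)
  then show ?thesis
    unfolding loewner_le_def using assms(3) by (auto intro!: psd_sum)
qed

lemma loewner_le_scaleR_right:
  assumes "c > 0" "loewner_le (c *\<^sub>R A) B"
  shows "loewner_le A ((1 / c) *\<^sub>R B)"
proof -
  have "(1 / c) *\<^sub>R B - A = (1 / c) *\<^sub>R (B - c *\<^sub>R A)"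
    using assms(1) by (simp add: scaleR_diff_right)
  then show ?thesis
    using assms unfolding loewner_le_def by (simp add: psd_scaleR)
qed

lemma psd_limit:
  assumes lim: "(Y \<longlongrightarrow> S) F" and "F \<noteq> bot" and psd: "eventually (\<lambda>m. psd (Y m)) F"
  shows "psd S"
proof -
  have entry: "((\<lambda>m. Y m $ i $ j) \<longlongrightarrow> S $ i $ j) F" for i j
    by (intro tendsto_intros lim)
  have "S $ i $ j = S $ j $ i" for i j
  proof (rule tendsto_unique[OF \<open>F \<noteq> bot\<close> entry])
    have "eventually (\<lambda>m. Y m $ j $ i = Y m $ i $ j) F"
      using psd by eventually_elim (simp add: psd_def sym_mat_nth)
    then show "((\<lambda>m. Y m $ i $ j) \<longlongrightarrow> S $ j $ i) F"
      by (rule Lim_transform_eventually[OF entry])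
  qed
  then have "sym_mat S"
    by (simp add: sym_mat_def transpose_def vec_eq_iff)
  moreover have "quad_form S v \<ge> 0" for v
  proof (rule tendsto_lowerbound[OF _ _ \<open>F \<noteq> bot\<close>])
    show "((\<lambda>m. quad_form (Y m) v) \<longlongrightarrow> quad_form S v) F"
      unfolding quad_form_def inner_vec_def matrix_vector_mult_def
      by (intro tendsto_intros entry)
    show "eventually (\<lambda>m. quad_form (Y m) v \<ge> 0) F"
      using psd by eventually_elim (simp add: psd_iff_quad_form)
  qed
  ultimately show ?thesis by (simp add: psd_iff_quad_form)
qed

lemma loewner_le_limit:
  assumes "(Y \<longlongrightarrow> S) F" "F \<noteq> bot" "eventually (\<lambda>m. loewner_le A (Y m)) F"
  shows "loewner_le A S"
  using assms unfolding loewner_le_def by (intro psd_limit[where Y = "\<lambda>m. Y m - A"] tendsto_intros)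

section \<open>Decompositions into two complementary projections\<close>

text \<open>Either projection may be zero, and then its coefficient is arbitrary.\<close>
definition spectral_decomp :: "real^'n^'n \<Rightarrow> real \<Rightarrow> real \<Rightarrow> real^'n^'n \<Rightarrow> real^'n^'n \<Rightarrow> bool" where
  "spectral_decomp A a b P Q \<longleftrightarrow> sym_mat P \<and> sym_mat Q \<and> P ** P = P \<and> Q ** Q = Q
     \<and> P ** Q = 0 \<and> Q ** P = 0 \<and> P + Q = mat 1 \<and> A = a *\<^sub>R P + b *\<^sub>R Q"

lemma spectral_decomp_mult:
  assumes "spectral_decomp A a b P Q"
  shows "(c *\<^sub>R P + d *\<^sub>R Q) ** (e *\<^sub>R P + f *\<^sub>R Q) = (c * e) *\<^sub>R P + (d * f) *\<^sub>R Q"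
  using assms unfolding spectral_decomp_def
  by (simp add: matrix_add_rdistrib matrix_add_ldistrib matrix_scalar_ac
      scalar_matrix_assoc[symmetric] mult.commute)

lemma spectral_decomp_recombine:
  "spectral_decomp A a b P Q \<Longrightarrow> spectral_decomp (c *\<^sub>R P + d *\<^sub>R Q) c d P Q"
  by (simp add: spectral_decomp_def)

lemma spectral_decomp_sym: "spectral_decomp A a b P Q \<Longrightarrow> sym_mat A"
  by (simp add: spectral_decomp_def sym_mat_add sym_mat_scaleR)

lemma spectral_decomp_eigen:
  assumes s: "spectral_decomp A a b P Q"
  shows "A ** P = a *\<^sub>R P" "A ** Q = b *\<^sub>R Q" "P ** A = a *\<^sub>R P" "Q ** A = b *\<^sub>R Q"
  using spectral_decomp_mult[OF s, of a b 1 0] spectral_decomp_mult[OF s, of a b 0 1]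
    spectral_decomp_mult[OF s, of 1 0 a b] spectral_decomp_mult[OF s, of 0 1 a b] s
  by (simp_all add: spectral_decomp_def)

lemma mpow_spectral_decomp:
  "spectral_decomp A a b P Q \<Longrightarrow> mpow A k = (a ^ k) *\<^sub>R P + (b ^ k) *\<^sub>R Q"
proof (induction k)
  case 0
  then show ?case by (simp add: spectral_decomp_def)
next
  case (Suc k)
  then have "A = a *\<^sub>R P + b *\<^sub>R Q" by (simp add: spectral_decomp_def)
  with Suc spectral_decomp_mult[OF Suc.prems] show ?case by simp
qed

lemma mexp_spectral_decomp:
  assumes "spectral_decomp A a b P Q"
  shows "mexp A = exp a *\<^sub>R P + exp b *\<^sub>R Q"
proof -
  have "(\<lambda>k. (1 / fact k) *\<^sub>R mpow A k)
      = (\<lambda>k. (a ^ k /\<^sub>R fact k) *\<^sub>R P + (b ^ k /\<^sub>R fact k) *\<^sub>R Q)"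
    using mpow_spectral_decomp[OF assms] by (auto simp: scaleR_add_right divide_inverse_commute)
  moreover have "(\<lambda>k. (a ^ k /\<^sub>R fact k) *\<^sub>R P + (b ^ k /\<^sub>R fact k) *\<^sub>R Q)
      sums (exp a *\<^sub>R P + exp b *\<^sub>R Q)"
    by (intro sums_add sums_scaleR_left exp_converges)
  ultimately show ?thesis
    unfolding mexp_def by (simp add: sums_iff)
qed

lemma spectral_decomp_mexp:
  "spectral_decomp A a b P Q \<Longrightarrow> spectral_decomp (mexp A) (exp a) (exp b) P Q"
  using mexp_spectral_decomp[of A a b P Q] by (simp add: spectral_decomp_def)

text \<open>If \<open>R\<close> and \<open>P\<close> are eigenprojections of \<open>M\<close> for \<open>a'\<close> and \<open>a\<close>, then \<open>R P = 0\<close> unless \<open>a = a'\<close>.\<close>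
lemma eigenprojection_cross:
  fixes R M P :: "real^'n^'n"
  assumes "R ** M = a' *\<^sub>R R" "M ** P = a *\<^sub>R P"
  shows "f a *\<^sub>R (R ** P) = f a' *\<^sub>R (R ** P)"
proof -
  have "a *\<^sub>R (R ** P) = R ** (M ** P)"
    using assms(2) by (simp add: matrix_scalar_ac scalar_matrix_assoc)
  also have "\<dots> = a' *\<^sub>R (R ** P)"
    using assms(1) by (simp add: matrix_mul_assoc scalar_matrix_assoc)
  finally have "a = a' \<or> R ** P = 0" by simp
  then show ?thesis by auto
qed

lemma spectral_decomp_fun_unique:
  assumes s: "spectral_decomp M a b P Q" and s': "spectral_decomp M a' b' P' Q'"
  shows "f a *\<^sub>R P + f b *\<^sub>R Q = f a' *\<^sub>R P' + f b' *\<^sub>R Q'"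
proof -
  note e = spectral_decomp_eigen[OF s] and e' = spectral_decomp_eigen[OF s']
  have PQ: "P + Q = mat 1" "P' + Q' = mat 1"
    using s s' by (simp_all add: spectral_decomp_def)
  have "f a *\<^sub>R P + f b *\<^sub>R Q = (P' + Q') ** (f a *\<^sub>R P + f b *\<^sub>R Q)"
    by (simp add: PQ)
  also have "\<dots> = f a *\<^sub>R (P' ** P) + f b *\<^sub>R (P' ** Q) + f a *\<^sub>R (Q' ** P) + f b *\<^sub>R (Q' ** Q)"
    by (simp add: matrix_add_rdistrib matrix_add_ldistrib matrix_scalar_ac
        scalar_matrix_assoc[symmetric] scaleR_add_right add_ac)
  also have "\<dots> = f a' *\<^sub>R (P' ** P) + f a' *\<^sub>R (P' ** Q) + f b' *\<^sub>R (Q' ** P) + f b' *\<^sub>R (Q' ** Q)"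
    by (simp only: eigenprojection_cross[OF e'(3) e(1), of f] eigenprojection_cross[OF e'(3) e(2), of f]
        eigenprojection_cross[OF e'(4) e(1), of f] eigenprojection_cross[OF e'(4) e(2), of f])
  also have "\<dots> = (f a' *\<^sub>R P' + f b' *\<^sub>R Q') ** (P + Q)"
    by (simp add: matrix_add_rdistrib matrix_add_ldistrib scalar_matrix_assoc[symmetric])
  also have "\<dots> = f a' *\<^sub>R P' + f b' *\<^sub>R Q'"
    by (simp add: PQ)
  finally show ?thesis .
qed

lemma quad_form_spectral_decomp:
  fixes A :: "real^'n^'n"
  assumes "spectral_decomp A a b P Q"
  shows "quad_form A v = a * quad_form P v + b * quad_form Q v"
    and "quad_form P v \<ge> 0" "quad_form Q v \<ge> 0"
    and "quad_form P v + quad_form Q v = v \<bullet> v"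
proof -
  have proj_nonneg: "quad_form R v \<ge> 0" if "sym_mat R" "R ** R = R" for R :: "real^'n^'n"
    using inner_matrix_sym[OF that(1), of v "R *v v"] that(2)
    by (simp add: quad_form_def matrix_vector_mul_assoc)
  show "quad_form A v = a * quad_form P v + b * quad_form Q v"
    using assms by (simp add: spectral_decomp_def quad_form_add quad_form_scaleR)
  show "quad_form P v \<ge> 0" "quad_form Q v \<ge> 0"
    using assms by (auto simp: spectral_decomp_def intro: proj_nonneg)
  show "quad_form P v + quad_form Q v = v \<bullet> v"
    using assms by (simp add: spectral_decomp_def flip: quad_form_add quad_form_mat_1)
qed

lemma eigenvalue_pos:
  fixes M P :: "real^'n^'n"
  assumes MP: "M ** P = a *\<^sub>R P" and "P \<noteq> 0"
    and pd: "\<And>v. v \<noteq> 0 \<Longrightarrow> quad_form M v > 0"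
  shows "a > 0"
proof -
  obtain x where x: "P *v x \<noteq> 0"
    using matrix_eq[of P 0] \<open>P \<noteq> 0\<close> by auto
  define w where "w = P *v x"
  have "M *v w = a *\<^sub>R w"
    by (simp add: w_def matrix_vector_mul_assoc MP scaleR_matrix_vector_assoc)
  then have "quad_form M w = a * (w \<bullet> w)"
    by (simp add: quad_form_def)
  moreover have "quad_form M w > 0" "w \<bullet> w > 0"
    using pd x by (auto simp: w_def)
  ultimately show ?thesis
    by (simp add: zero_less_mult_iff)
qed

text \<open>A vanishing projection carries no eigenvalue, so its coefficient may be replaced by \<open>1\<close>.\<close>
lemma spectral_decomp_pos:
  assumes s: "spectral_decomp M a b P Q" and pd: "\<And>v. v \<noteq> 0 \<Longrightarrow> quad_form M v > 0"
  obtains a' b' where "a' > 0" "b' > 0" "spectral_decomp M a' b' P Q"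
proof
  define a' where "a' = (if P = 0 then 1 else a)"
  define b' where "b' = (if Q = 0 then 1 else b)"
  show "a' > 0"
    using eigenvalue_pos[OF spectral_decomp_eigen(1)[OF s] _ pd] by (simp add: a'_def)
  show "b' > 0"
    using eigenvalue_pos[OF spectral_decomp_eigen(2)[OF s] _ pd] by (simp add: b'_def)
  show "spectral_decomp M a' b' P Q"
    using s by (simp add: spectral_decomp_def a'_def b'_def)
qed

section \<open>Symmetric \<open>2 \<times> 2\<close> matrices\<close>

lemma mat2_eq_iff:
  "(A::mat2) = B \<longleftrightarrow> A$1$1 = B$1$1 \<and> A$1$2 = B$1$2 \<and> A$2$1 = B$2$1 \<and> A$2$2 = B$2$2"
  by (auto simp: vec_eq_iff forall_2)

lemma matrix_mult_mat2_nth: "((A::mat2) ** B) $ i $ j = A$i$1 * B$1$j + A$i$2 * B$2$j"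
  by (simp add: matrix_matrix_mult_def sum_2)

text \<open>For \<open>(s, t) = (cos \<theta>, sin \<theta>)\<close> this is the orthogonal projection onto the line spanned
  by \<open>(cos (\<theta>/2), sin (\<theta>/2))\<close>; \<open>line_proj (-s) (-t)\<close> projects onto its orthogonal complement.\<close>
definition line_proj :: "real \<Rightarrow> real \<Rightarrow> mat2" where
  "line_proj s t = (\<chi> i j. if i = 1 then (if j = 1 then (1 + s) / 2 else t / 2)
                             else (if j = 1 then t / 2 else (1 - s) / 2))"

lemma line_proj_nth:
  "line_proj s t $ 1 $ 1 = (1 + s) / 2" "line_proj s t $ 1 $ 2 = t / 2"
  "line_proj s t $ 2 $ 1 = t / 2" "line_proj s t $ 2 $ 2 = (1 - s) / 2"
  by (simp_all add: line_proj_def)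

lemma spectral_decomp_line_proj:
  assumes "s\<^sup>2 + t\<^sup>2 = 1"
  shows "spectral_decomp (a *\<^sub>R line_proj s t + b *\<^sub>R line_proj (-s) (-t)) a b
           (line_proj s t) (line_proj (-s) (-t))"
proof -
  have t2: "t * t = 1 - s * s"
    using assms by (simp add: power2_eq_square)
  show ?thesis
    unfolding spectral_decomp_def sym_mat_def
    by (simp add: mat2_eq_iff matrix_mult_mat2_nth line_proj_nth transpose_def mat_def;
        simp add: field_simps t2)
qed

lemma spectral_decomp_exists:
  fixes A :: mat2
  assumes "sym_mat A"
  obtains a b P Q where "spectral_decomp A a b P Q"
proof -
  define a c b where "a = A$1$1" and "c = A$2$2" and "b = A$1$2"
  have b': "A$2$1 = b"
    using sym_mat_nth[OF assms] by (simp add: b_def)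
  define d where "d = sqrt (((a - c) / 2)\<^sup>2 + b\<^sup>2)"
  show ?thesis
  proof (cases "d = 0")
    case True
    then have "a = c" "b = 0"
      by (auto simp: d_def power2_eq_square add_nonneg_eq_0_iff)
    then have "A = a *\<^sub>R line_proj 1 0 + c *\<^sub>R line_proj (-1) (-0)"
      using b' by (simp add: mat2_eq_iff line_proj_nth a_def b_def c_def)
    then show ?thesis
      using spectral_decomp_line_proj[of 1 0 a c] that by auto
  next
    case False
    moreover have "d \<ge> 0" by (simp add: d_def)
    ultimately have "d > 0" by simp
    define s t where "s = (a - c) / (2 * d)" and "t = b / d"
    have "d\<^sup>2 = ((a - c) / 2)\<^sup>2 + b\<^sup>2"
      by (simp add: d_def)
    then have "s\<^sup>2 + t\<^sup>2 = 1"
      using \<open>d > 0\<close> by (simp add: s_def t_def field_simps power2_eq_square)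
    moreover have "A = ((a + c) / 2 + d) *\<^sub>R line_proj s t + ((a + c) / 2 - d) *\<^sub>R line_proj (-s) (-t)"
      using b' \<open>d > 0\<close> by (simp add: mat2_eq_iff line_proj_nth a_def b_def c_def s_def t_def field_simps)
    ultimately show ?thesis
      using spectral_decomp_line_proj that by metis
  qed
qed

lemma mlog_spectral_decomp:
  fixes M :: mat2
  assumes s: "spectral_decomp M a b P Q" and "a > 0" "b > 0"
  shows "mlog M = ln a *\<^sub>R P + ln b *\<^sub>R Q"
  unfolding mlog_def
proof (rule the_equality)
  have s_ln: "spectral_decomp (ln a *\<^sub>R P + ln b *\<^sub>R Q) (ln a) (ln b) P Q"
    by (rule spectral_decomp_recombine[OF s])
  show "sym_mat (ln a *\<^sub>R P + ln b *\<^sub>R Q) \<and> mexp (ln a *\<^sub>R P + ln b *\<^sub>R Q) = M"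
    using spectral_decomp_sym[OF s_ln] mexp_spectral_decomp[OF s_ln] s \<open>a > 0\<close> \<open>b > 0\<close>
    by (simp add: spectral_decomp_def)
next
  fix L assume L: "sym_mat L \<and> mexp L = M"
  then obtain a' b' P' Q' where sL: "spectral_decomp L a' b' P' Q'"
    using spectral_decomp_exists by blast
  have "spectral_decomp M (exp a') (exp b') P' Q'"
    using spectral_decomp_mexp[OF sL] L by simp
  from spectral_decomp_fun_unique[OF s this, of ln]
  have "ln a *\<^sub>R P + ln b *\<^sub>R Q = a' *\<^sub>R P' + b' *\<^sub>R Q'" by simp
  also have "\<dots> = L"
    using sL by (simp add: spectral_decomp_def)
  finally show "L = ln a *\<^sub>R P + ln b *\<^sub>R Q" by simp
qed

lemma quad_form_mexp_pos:
  fixes A :: mat2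
  assumes "sym_mat A" "v \<noteq> 0"
  shows "quad_form (mexp A) v > 0"
proof -
  obtain a b P Q where "spectral_decomp A a b P Q"
    using spectral_decomp_exists[OF assms(1)] .
  note q = quad_form_spectral_decomp[OF spectral_decomp_mexp[OF this], of v]
  have "quad_form P v > 0 \<or> quad_form Q v > 0"
    using q(2-4) \<open>v \<noteq> 0\<close> by auto
  then show ?thesis
    using q(1-3) by (auto intro: add_pos_nonneg add_nonneg_pos)
qed

lemma psd_mexp:
  fixes A :: mat2
  assumes "sym_mat A"
  shows "psd (mexp A)"
proof -
  obtain a b P Q where "spectral_decomp A a b P Q"
    using spectral_decomp_exists[OF assms] .
  then have "sym_mat (mexp A)"
    by (rule spectral_decomp_sym[OF spectral_decomp_mexp])
  moreover have "quad_form (mexp A) v \<ge> 0" for v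
    using quad_form_mexp_pos[OF assms, of v] by (cases "v = 0") (auto simp: quad_form_def)
  ultimately show ?thesis
    by (simp add: psd_iff_quad_form)
qed

section \<open>Operator monotonicity of the logarithm\<close>

text \<open>\<open>G T = \<Sum> e\<^sub>i ln (p\<^sub>i + T) - \<Sum> f\<^sub>i ln (q\<^sub>i + T)\<close> has nonpositive derivative, and it tends
  to \<open>0\<close> as \<open>T \<rightarrow> \<infinity>\<close> because the weights have equal sums; hence \<open>G 0 \<ge> 0\<close>.\<close>
lemma weighted_ln_le_of_inverse_le:
  fixes p1 p2 q1 q2 e1 e2 f1 f2 :: real
  assumes pos: "p1 > 0" "p2 > 0" "q1 > 0" "q2 > 0"
    and weights: "e1 + e2 = f1 + f2"
    and inverse_le: "\<And>t. t \<ge> 0 \<Longrightarrow> e1 / (p1 + t) + e2 / (p2 + t) \<le> f1 / (q1 + t) + f2 / (q2 + t)"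
  shows "f1 * ln q1 + f2 * ln q2 \<le> e1 * ln p1 + e2 * ln p2"
proof -
  define G where "G T = e1 * ln (p1 + T) + e2 * ln (p2 + T) - f1 * ln (q1 + T) - f2 * ln (q2 + T)"
    for T
  have antimono: "G T \<le> G 0" if "T \<ge> 0" for T
  proof (rule DERIV_nonpos_imp_nonincreasing[OF that])
    fix x :: real assume x: "0 \<le> x" "x \<le> T"
    have "DERIV G x :> e1 / (p1 + x) + e2 / (p2 + x) - f1 / (q1 + x) - f2 / (q2 + x)"
      unfolding G_def using pos x by (auto intro!: derivative_eq_intros simp: divide_inverse)
    then show "\<exists>y. DERIV G x :> y \<and> y \<le> 0"
      using inverse_le[OF x(1)] by force
  qed
  have ln_ratio: "((\<lambda>T. ln (c + T) - ln (1 + T)) \<longlongrightarrow> 0) at_top" if "c > 0" for c :: real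
    using that by real_asymp
  have "G = (\<lambda>T. e1 * (ln (p1 + T) - ln (1 + T)) + e2 * (ln (p2 + T) - ln (1 + T))
              - f1 * (ln (q1 + T) - ln (1 + T)) - f2 * (ln (q2 + T) - ln (1 + T)))"
    using weights by (simp add: G_def fun_eq_iff algebra_simps) (metis distrib_right)
  moreover have "((\<lambda>T. e1 * (ln (p1 + T) - ln (1 + T)) + e2 * (ln (p2 + T) - ln (1 + T))
              - f1 * (ln (q1 + T) - ln (1 + T)) - f2 * (ln (q2 + T) - ln (1 + T)))
             \<longlongrightarrow> e1 * 0 + e2 * 0 - f1 * 0 - f2 * 0) at_top"
    using pos by (intro tendsto_intros ln_ratio)
  ultimately have "(G \<longlongrightarrow> 0) at_top"
    by simp
  then have "0 \<le> G 0"
    by (rule tendsto_upperbound) (auto intro: antimono eventually_ge_at_top[THEN eventually_mono])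
  then show ?thesis
    by (simp add: G_def)
qed

text \<open>With \<open>u = A\<inverse> v\<close> and \<open>w = B\<inverse> v\<close>:
  \<open>0 \<le> \<langle>u - w, B (u - w)\<rangle> \<le> \<langle>u, A u\<rangle> - 2\<langle>u, v\<rangle> + \<langle>w, v\<rangle> = \<langle>w, v\<rangle> - \<langle>u, v\<rangle>\<close>.\<close>
lemma quad_form_inverse_antimono:
  fixes A A' B B' :: "real^'n^'n"
  assumes "sym_mat B" and inv: "A ** A' = mat 1" "B ** B' = mat 1"
    and le: "\<And>x. quad_form B x \<le> quad_form A x" and B_nonneg: "\<And>x. quad_form B x \<ge> 0"
  shows "quad_form A' v \<le> quad_form B' v"
proof -
  define u w where "u = A' *v v" and "w = B' *v v"
  have Au: "A *v u = v" and Bw: "B *v w = v"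
    by (simp_all add: u_def w_def matrix_vector_mul_assoc inv)
  have "w \<bullet> (B *v u) = u \<bullet> v"
    using inner_matrix_sym[OF \<open>sym_mat B\<close>, of w u] Bw by (simp add: inner_commute)
  then have "quad_form B (u - w) = quad_form B u - 2 * (u \<bullet> v) + w \<bullet> v"
    by (simp add: quad_form_def matrix_vector_mult_diff_distrib inner_diff_left inner_diff_right Bw)
  also have "\<dots> \<le> quad_form A u - 2 * (u \<bullet> v) + w \<bullet> v"
    using le by simp
  also have "\<dots> = w \<bullet> v - u \<bullet> v"
    using Au by (simp add: quad_form_def)
  finally have "u \<bullet> v \<le> w \<bullet> v"
    using B_nonneg[of "u - w"] by simp
  then show ?thesis
    by (simp add: quad_form_def u_def w_def inner_commute)
qed

lemma quad_form_resolvent_antimono: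
  fixes P Q :: "real^'n^'n"
  assumes sP: "spectral_decomp P p1 p2 E1 E2" and sQ: "spectral_decomp Q q1 q2 F1 F2"
    and pos: "p1 + t > 0" "p2 + t > 0" "q1 + t > 0" "q2 + t > 0"
    and le: "\<And>x. quad_form Q x \<le> quad_form P x"
  shows "quad_form E1 v / (p1 + t) + quad_form E2 v / (p2 + t)
           \<le> quad_form F1 v / (q1 + t) + quad_form F2 v / (q2 + t)"
proof -
  define Pt Qt where "Pt = (p1 + t) *\<^sub>R E1 + (p2 + t) *\<^sub>R E2"
    and "Qt = (q1 + t) *\<^sub>R F1 + (q2 + t) *\<^sub>R F2"
  define RP RQ where "RP = (1 / (p1 + t)) *\<^sub>R E1 + (1 / (p2 + t)) *\<^sub>R E2"
    and "RQ = (1 / (q1 + t)) *\<^sub>R F1 + (1 / (q2 + t)) *\<^sub>R F2"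
  have shift: "quad_form (c1 *\<^sub>R G1 + c2 *\<^sub>R G2) x = quad_form M x + t * (x \<bullet> x)"
    if "spectral_decomp M m1 m2 G1 G2" "c1 = m1 + t" "c2 = m2 + t"
    for M G1 G2 :: "real^'n^'n" and m1 m2 c1 c2 x
    using quad_form_spectral_decomp[OF that(1), of x] that(2,3)
    by (simp add: quad_form_add quad_form_scaleR algebra_simps flip: distrib_left)
  have "quad_form RP v \<le> quad_form RQ v"
  proof (rule quad_form_inverse_antimono)
    show "sym_mat Qt"
      unfolding Qt_def by (rule spectral_decomp_sym[OF spectral_decomp_recombine[OF sQ]])
    show "Pt ** RP = mat 1" "Qt ** RQ = mat 1"
      using spectral_decomp_mult[OF sP] spectral_decomp_mult[OF sQ] sP sQ pos
      by (simp_all add: Pt_def RP_def Qt_def RQ_def spectral_decomp_def)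
    show "quad_form Qt x \<le> quad_form Pt x" for x
      using shift[OF sQ, of "q1 + t" "q2 + t" x] shift[OF sP, of "p1 + t" "p2 + t" x] le[of x]
      by (simp add: Pt_def Qt_def)
    show "quad_form Qt x \<ge> 0" for x
      using quad_form_spectral_decomp[OF sQ, of x] pos
      by (simp add: Qt_def quad_form_add quad_form_scaleR)
  qed
  then show ?thesis
    by (simp add: RP_def RQ_def quad_form_add quad_form_scaleR)
qed

lemma quad_form_ln_mono:
  fixes P Q :: "real^'n^'n"
  assumes sP: "spectral_decomp P p1 p2 E1 E2" and sQ: "spectral_decomp Q q1 q2 F1 F2"
    and pos: "p1 > 0" "p2 > 0" "q1 > 0" "q2 > 0"
    and le: "\<And>x. quad_form Q x \<le> quad_form P x"
  shows "quad_form (ln q1 *\<^sub>R F1 + ln q2 *\<^sub>R F2) v \<le> quad_form (ln p1 *\<^sub>R E1 + ln p2 *\<^sub>R E2) v"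
proof -
  have "quad_form F1 v * ln q1 + quad_form F2 v * ln q2 \<le> quad_form E1 v * ln p1 + quad_form E2 v * ln p2"
  proof (rule weighted_ln_le_of_inverse_le[OF pos])
    show "quad_form E1 v + quad_form E2 v = quad_form F1 v + quad_form F2 v"
      using quad_form_spectral_decomp(4)[OF sP] quad_form_spectral_decomp(4)[OF sQ] by simp
    show "quad_form E1 v / (p1 + t) + quad_form E2 v / (p2 + t)
            \<le> quad_form F1 v / (q1 + t) + quad_form F2 v / (q2 + t)" if "t \<ge> 0" for t
      using pos that by (intro quad_form_resolvent_antimono[OF sP sQ _ _ _ _ le]) auto
  qed
  then show ?thesis
    by (simp add: quad_form_add quad_form_scaleR mult.commute)
qed

lemma loewner_le_mlog:
  fixes A M :: mat2
  assumes "sym_mat A" and le: "loewner_le (mexp A) M"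
  shows "loewner_le A (mlog M)"
proof -
  obtain c d E F where sA: "spectral_decomp A c d E F"
    using spectral_decomp_exists[OF \<open>sym_mat A\<close>] .
  have sym_expA: "sym_mat (mexp A)"
    using psd_mexp[OF \<open>sym_mat A\<close>] by (simp add: psd_def)
  have M_ge: "quad_form (mexp A) x \<le> quad_form M x" for x
    using le by (simp add: loewner_le_iff_quad_form)
  have "sym_mat M"
    using sym_mat_add[OF _ sym_expA, of "M - mexp A"] le by (simp add: loewner_le_def psd_def)
  then obtain a0 b0 P Q where "spectral_decomp M a0 b0 P Q"
    using spectral_decomp_exists by blast
  moreover have "quad_form M x > 0" if "x \<noteq> 0" for x
    using quad_form_mexp_pos[OF \<open>sym_mat A\<close> that] M_ge[of x] by linarith
  ultimately obtain a b where ab: "a > 0" "b > 0" and sM: "spectral_decomp M a b P Q"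
    by (rule spectral_decomp_pos)
  have mlog: "mlog M = ln a *\<^sub>R P + ln b *\<^sub>R Q"
    by (rule mlog_spectral_decomp[OF sM ab])
  have "quad_form (ln (exp c) *\<^sub>R E + ln (exp d) *\<^sub>R F) v \<le> quad_form (mlog M) v" for v
    unfolding mlog
    by (rule quad_form_ln_mono[OF sM spectral_decomp_mexp[OF sA] ab exp_gt_zero exp_gt_zero M_ge])
  moreover have "sym_mat (mlog M - A)"
    using sym_mat_diff[OF spectral_decomp_sym[OF spectral_decomp_recombine[OF sM]] \<open>sym_mat A\<close>]
    by (simp add: mlog)
  ultimately show ?thesis
    using sA by (simp add: loewner_le_iff_quad_form spectral_decomp_def)
qed

theorem lemma6:
  fixes X :: "nat \<Rightarrow> real^2^2" and n :: nat and S :: "real^2^2"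
  assumes sym: "\<And>i. i \<in> {1..n} \<Longrightarrow> sym_mat (X i)"
    and lim: "(\<lambda>m::nat. (1 / real m) *\<^sub>R mlog (\<Sum>i=1..n. mexp (real m *\<^sub>R X i)))
              \<longlonglongrightarrow> S"
  shows "\<forall>j\<in>{1..n}. loewner_le (X j) S"
proof
  fix j assume j: "j \<in> {1..n}"
  have "loewner_le (X j) ((1 / real m) *\<^sub>R mlog (\<Sum>i=1..n. mexp (real m *\<^sub>R X i)))"
    if "m \<ge> 1" for m :: nat
  proof (rule loewner_le_scaleR_right)
    have "loewner_le (mexp (real m *\<^sub>R X j)) (\<Sum>i=1..n. mexp (real m *\<^sub>R X i))"
      using j by (intro loewner_le_member_sum psd_mexp sym_mat_scaleR sym) auto
    then show "loewner_le (real m *\<^sub>R X j) (mlog (\<Sum>i=1..n. mexp (real m *\<^sub>R X i)))"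
      using j by (intro loewner_le_mlog sym_mat_scaleR sym)
    show "real m > 0"
      using that by simp
  qed
  then show "loewner_le (X j) S"
    by (intro loewner_le_limit[OF lim trivial_limit_sequentially])
      (auto simp: eventually_sequentially)
qed

end
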